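(* Fix $\varepsilon\in(0,1)$. Let $L$ be a finite set of links, with fixed transmission powers $P_l>0$ satisfying $P_l\eta\|l\|^{-\kappa}>\sigma\xi$ for every $l\in L$, and with nonnegative weights $w_l$ for $l\in L$. Let $S^\ast$ be any $1$-signal set of links (possibly containing links outside $L$), and let $X\subseteq L$ be a $\frac{1}{1-\varepsilon}$-signal subset of $L$ of maximum total weight among all $\frac1{1-\varepsilon}$-signal subsets of $L$. Then $$W(S^\ast\cap L)\;\le\;\frac{4}{(1-\varepsilon)^2}\,W(X).$$
   Context: A link $l=(u,v)$ consists of a sender $u$ and a receiver $v$ in the plane, and $\|l\|=\|uv\|$ is its length. The sender of $l$ transmits at the fixed power $P_l$. The constants are $\eta>0$ (reference loss), $\kappa>2$ (path-loss exponent), $\sigma>0$ (SINR threshold) and $\xi\ge0$ (noise). For a link $l'=(u',v')$ and a link $l=(u,v)$, the relative interference of $l'$ on $l$ is $$r_{l'}(l)=\frac{P_{l'}\eta\|u'v\|^{-\kappa}}{P_l\eta\|uv\|^{-\kappa}},$$ with the convention $r_l(l)=0$. Let $$c_l=\frac{\sigma}{1-\sigma\xi/(P_l\eta\|l\|^{-\kappa})}.$$ The affectness of $l$ caused by a set $S$ of links is $a_S(l)=c_l\sum_{l'\in S}r_{l'}(l)$. For $p>0$, a set $S$ of links is a $p$-signal set if $a_S(l)\le 1/p$ for every $l\in S$. A $1$-signal set is exactly a set in which every link satisfies the SINR condition $\mathrm{SINR}\ge\sigma$ when all links of the set transmit simultaneously. For a set $S$ of links, $W(S)=\sum_{l\in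 S}w_l$ denotes its total weight. *)

theory Defs
  imports "HOL-Analysis.Analysis"
begin

text \<open>Links are elements of an arbitrary type 'l; each link l has a sender
  position u l and a receiver position v l in the plane (real^2).\<close>

definition link_len :: "('l \<Rightarrow> real^2) \<Rightarrow> ('l \<Rightarrow> real^2) \<Rightarrow> 'l \<Rightarrow> real" where
  "link_len u v l = dist (u l) (v l)"

definition rel_interf ::
  "real \<Rightarrow> real \<Rightarrow> ('l \<Rightarrow> real^2) \<Rightarrow> ('l \<Rightarrow> real^2) \<Rightarrow> ('l \<Rightarrow> real) \<Rightarrow> 'l \<Rightarrow> 'l \<Rightarrow> real" where
  "rel_interf \<eta> \<kappa> u v P l' l =
     (if l' = l then 0
      else (P l' * \<eta> * dist (u l') (v l) powr (-\<kappa>)) /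
           (P l * \<eta> * link_len u v l powr (-\<kappa>)))"

definition c_fac ::
  "real \<Rightarrow> real \<Rightarrow> real \<Rightarrow> real \<Rightarrow> ('l \<Rightarrow> real^2) \<Rightarrow> ('l \<Rightarrow> real^2) \<Rightarrow> ('l \<Rightarrow> real) \<Rightarrow> 'l \<Rightarrow> real" where
  "c_fac \<eta> \<kappa> \<sigma> \<xi> u v P l =
     \<sigma> / (1 - \<sigma> * \<xi> / (P l * \<eta> * link_len u v l powr (-\<kappa>)))"

definition affectness ::
  "real \<Rightarrow> real \<Rightarrow> real \<Rightarrow> real \<Rightarrow> ('l \<Rightarrow> real^2) \<Rightarrow> ('l \<Rightarrow> real^2) \<Rightarrow> ('l \<Rightarrow> real)
     \<Rightarrow> 'l set \<Rightarrow> 'l \<Rightarrow> real" where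
  "affectness \<eta> \<kappa> \<sigma> \<xi> u v P S l =
     c_fac \<eta> \<kappa> \<sigma> \<xi> u v P l * (\<Sum>l'\<in>S. rel_interf \<eta> \<kappa> u v P l' l)"

text \<open>A sender located exactly at the
  receiver of another link of the set would cause infinite interference
  (distance^(-kappa) = infinity), which Isabelle's powr would render as 0;
  such configurations are therefore explicitly excluded.\<close>
definition p_signal ::
  "real \<Rightarrow> real \<Rightarrow> real \<Rightarrow> real \<Rightarrow> ('l \<Rightarrow> real^2) \<Rightarrow> ('l \<Rightarrow> real^2) \<Rightarrow> ('l \<Rightarrow> real)
     \<Rightarrow> real \<Rightarrow> 'l set \<Rightarrow> bool" where
  "p_signal \<eta> \<kappa> \<sigma> \<xi> u v P p S \<longleftrightarrow>
     finite S \<and>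
     (\<forall>l\<in>S. \<forall>l'\<in>S. l' \<noteq> l \<longrightarrow> u l' \<noteq> v l) \<and>
     (\<forall>l\<in>S. affectness \<eta> \<kappa> \<sigma> \<xi> u v P S l \<le> 1 / p)"

definition total_weight :: "('l \<Rightarrow> real) \<Rightarrow> 'l set \<Rightarrow> real" where
  "total_weight w S = (\<Sum>l\<in>S. w l)"

end

theory Submission
  imports Defs
begin

(*
  Keep each link of S = Sstar \<inter> L independently with probability p = (1 - \<epsilon>)/2 and
  consider the potential  w(Z) - (1/(1 - \<epsilon>)) \<Sum>l\<in>Z. w l * a_Z(l)  of the random set Z.
  Pairs of distinct links survive with probability p^2, so a_S(l) \<le> 1 gives an expected
  potential of at least p W - p^2 W/(1 - \<epsilon>) = (1 - \<epsilon>) W/4, where W = W(S).  Take Z with at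
  least this potential and drop the links l with a_Z(l) > 1 - \<epsilon>: their weight is bounded by
  the penalty term, and what remains is a 1/(1 - \<epsilon>)-signal subset of L, hence weighs at
  most W(X).  This even gives the factor 4/(1 - \<epsilon>).
*)

(* The probability that a random subset of T, containing each element independently with
   probability p, equals Z; expectations are written as weighted sums over Pow T. *)
definition bernoulli_subset_weight :: "real \<Rightarrow> 'a set \<Rightarrow> 'a set \<Rightarrow> real" where
  "bernoulli_subset_weight p T Z = p ^ card Z * (1 - p) ^ card (T - Z)"

lemma sum_bernoulli_subset_weight_supsets:
  assumes "finite T" and "A \<subseteq> T"
  shows "(\<Sum>Z\<in>Pow T. if A \<subseteq> Z then bernoulli_subset_weight p T Z else 0) = p ^ card A"
proof -
  define q where "q x = (if x \<in> A then 0 else 1 - p)" for x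
  have "(if A \<subseteq> Z then bernoulli_subset_weight p T Z else 0)
      = (\<Prod>x\<in>Z. p) * (\<Prod>x\<in>T - Z. q x)" if "Z \<subseteq> T" for Z
  proof (cases "A \<subseteq> Z")
    case True
    then have "(\<Prod>x\<in>T - Z. q x) = (\<Prod>x\<in>T - Z. 1 - p)"
      by (intro prod.cong) (auto simp: q_def)
    then have "(\<Prod>x\<in>T - Z. q x) = (1 - p) ^ card (T - Z)" by simp
    then show ?thesis using True by (simp add: bernoulli_subset_weight_def)
  next
    case False
    then obtain x where "x \<in> A" "x \<notin> Z" by blast
    then have "(\<Prod>x\<in>T - Z. q x) = 0"
      using assms by (intro prod_zero) (auto simp: q_def finite_subset)
    then show ?thesis using False by simp
  qed
  then have "(\<Sum>Z\<in>Pow T. if A \<subseteq> Z then bernoulli_subset_weight p T Z else 0)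
      = (\<Sum>Z\<in>Pow T. (\<Prod>x\<in>Z. p) * (\<Prod>x\<in>T - Z. q x))"
    by (intro sum.cong) auto
  also have "\<dots> = (\<Prod>x\<in>T. p + q x)"
    by (rule prod_add[OF assms(1), symmetric])
  also have "\<dots> = (\<Prod>x\<in>T. if x \<in> A then p else 1)"
    by (intro prod.cong) (auto simp: q_def)
  also have "\<dots> = p ^ card A"
    using assms by (simp add: prod.If_cases Int_absorb1)
  finally show ?thesis .
qed

lemma bernoulli_subset_weight_nonneg:
  "0 \<le> p \<Longrightarrow> p \<le> 1 \<Longrightarrow> 0 \<le> bernoulli_subset_weight p T Z"
  by (simp add: bernoulli_subset_weight_def)

lemma sum_bernoulli_subset_weight:
  "finite T \<Longrightarrow> (\<Sum>Z\<in>Pow T. bernoulli_subset_weight p T Z) = 1"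
  using sum_bernoulli_subset_weight_supsets[of T "{}" p] by simp

lemma sum_bernoulli_subset_weight_indicators:
  assumes "finite T" and "\<And>i. i \<in> I \<Longrightarrow> A i \<subseteq> T"
  shows "(\<Sum>Z\<in>Pow T. bernoulli_subset_weight p T Z * (\<Sum>i\<in>I. if A i \<subseteq> Z then g i else 0))
       = (\<Sum>i\<in>I. g i * p ^ card (A i))"
proof -
  have "(\<Sum>Z\<in>Pow T. bernoulli_subset_weight p T Z * (\<Sum>i\<in>I. if A i \<subseteq> Z then g i else 0))
      = (\<Sum>i\<in>I. g i * (\<Sum>Z\<in>Pow T. if A i \<subseteq> Z then bernoulli_subset_weight p T Z else 0))"
    by (simp add: sum_distrib_left if_distrib mult.commute cong: if_cong) (rule sum.swap)
  also have "\<dots> = (\<Sum>i\<in>I. g i * p ^ card (A i))"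
    using assms by (simp add: sum_bernoulli_subset_weight_supsets)
  finally show ?thesis .
qed

lemma expectation_sum_bernoulli_subset:
  assumes "finite T"
  shows "(\<Sum>Z\<in>Pow T. bernoulli_subset_weight p T Z * sum f Z) = p * sum f T"
proof -
  have "sum f Z = (\<Sum>l\<in>T. if {l} \<subseteq> Z then f l else 0)" if "Z \<subseteq> T" for Z
    using sum.inter_restrict[OF assms, of f Z] that by (simp add: Int_absorb1)
  then have "(\<Sum>Z\<in>Pow T. bernoulli_subset_weight p T Z * sum f Z)
      = (\<Sum>Z\<in>Pow T. bernoulli_subset_weight p T Z * (\<Sum>l\<in>T. if {l} \<subseteq> Z then f l else 0))"
    by (intro sum.cong) auto
  also have "\<dots> = (\<Sum>l\<in>T. f l * p ^ card {l})"
    by (rule sum_bernoulli_subset_weight_indicators) (use assms in auto)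
  also have "\<dots> = p * sum f T"
    by (simp add: sum_distrib_left mult.commute)
  finally show ?thesis .
qed

lemma expectation_double_sum_bernoulli_subset:
  assumes "finite T"
  shows "(\<Sum>Z\<in>Pow T. bernoulli_subset_weight p T Z * (\<Sum>l\<in>Z. \<Sum>l'\<in>Z. g l l'))
       = (\<Sum>l\<in>T. \<Sum>l'\<in>T. g l l' * p ^ card {l, l'})"
proof -
  have "(\<Sum>l\<in>Z. \<Sum>l'\<in>Z. g l l')
      = (\<Sum>i\<in>T \<times> T. if (\<lambda>(l, l'). {l, l'}) i \<subseteq> Z then case_prod g i else 0)"
    if "Z \<subseteq> T" for Z
  proof -
    have "finite Z" using that assms finite_subset by blast
    then have "(\<Sum>l\<in>Z. \<Sum>l'\<in>Z. g l l') = (\<Sum>i\<in>Z \<times> Z. case_prod g i)"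
      by (simp add: sum.cartesian_product)
    also have "\<dots> = (\<Sum>i\<in>T \<times> T. if (\<lambda>(l, l'). {l, l'}) i \<subseteq> Z then case_prod g i else 0)"
      using that assms by (intro sum.mono_neutral_cong_left) (auto simp: split_beta split: if_splits)
    finally show ?thesis .
  qed
  then have "(\<Sum>Z\<in>Pow T. bernoulli_subset_weight p T Z * (\<Sum>l\<in>Z. \<Sum>l'\<in>Z. g l l'))
      = (\<Sum>Z\<in>Pow T. bernoulli_subset_weight p T Z *
           (\<Sum>i\<in>T \<times> T. if (\<lambda>(l, l'). {l, l'}) i \<subseteq> Z then case_prod g i else 0))"
    by (intro sum.cong) auto
  also have "\<dots> = (\<Sum>i\<in>T \<times> T. case_prod g i * p ^ card ((\<lambda>(l, l'). {l, l'}) i))"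
    by (rule sum_bernoulli_subset_weight_indicators) (use assms in auto)
  also have "\<dots> = (\<Sum>l\<in>T. \<Sum>l'\<in>T. g l l' * p ^ card {l, l'})"
    by (simp add: sum.cartesian_product split_beta)
  finally show ?thesis .
qed

lemma exists_ge_weighted_average:
  fixes q f :: "'a \<Rightarrow> real"
  assumes "finite A" and "A \<noteq> {}" and "\<And>x. x \<in> A \<Longrightarrow> 0 \<le> q x" and "sum q A = 1"
  obtains x where "x \<in> A" and "(\<Sum>y\<in>A. q y * f y) \<le> f x"
proof -
  have "Max (f ` A) \<in> f ` A" using assms(1,2) by simp
  then obtain x where x: "x \<in> A" "f x = Max (f ` A)" by auto
  have "(\<Sum>y\<in>A. q y * f y) \<le> (\<Sum>y\<in>A. q y * f x)"
    using x assms(1,3) by (intro sum_mono mult_left_mono) auto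
  also have "\<dots> = f x" using assms(4) by (simp add: sum_distrib_right[symmetric])
  finally show ?thesis using x(1) that by blast
qed

lemma expected_interference_potential_ge:
  fixes w :: "'a \<Rightarrow> real" and \<alpha> :: "'a \<Rightarrow> 'a \<Rightarrow> real"
  assumes "finite S" and "0 \<le> p" and "0 \<le> c"
    and "\<And>l. l \<in> S \<Longrightarrow> 0 \<le> w l"
    and "\<And>l. l \<in> S \<Longrightarrow> \<alpha> l l = 0"
    and "\<And>l. l \<in> S \<Longrightarrow> (\<Sum>l'\<in>S. \<alpha> l' l) \<le> 1"
  shows "p * sum w S - c * p\<^sup>2 * sum w S
       \<le> (\<Sum>Z\<in>Pow S. bernoulli_subset_weight p S Z *
             (sum w Z - c * (\<Sum>l\<in>Z. \<Sum>l'\<in>Z. w l * \<alpha> l' l)))"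
proof -
  \<comment> \<open>only pairs with l \<noteq> l' survive with probability p^2; the diagonal terms vanish\<close>
  have "(\<Sum>l\<in>S. \<Sum>l'\<in>S. w l * \<alpha> l' l * p ^ card {l, l'})
      = (\<Sum>l\<in>S. p\<^sup>2 * (w l * (\<Sum>l'\<in>S. \<alpha> l' l)))"
    using assms(5) by (intro sum.cong refl)
      (auto simp: sum_distrib_left power2_eq_square card_insert_if intro!: sum.cong)
  also have "\<dots> \<le> (\<Sum>l\<in>S. p\<^sup>2 * w l)"
    using assms(4,6) by (intro sum_mono mult_left_mono) (auto simp: mult_left_le)
  finally have quadratic: "(\<Sum>l\<in>S. \<Sum>l'\<in>S. w l * \<alpha> l' l * p ^ card {l, l'}) \<le> p\<^sup>2 * sum w S"
    by (simp add: sum_distrib_left)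
  have linearity: "(\<Sum>Z\<in>Pow S. bernoulli_subset_weight p S Z * (sum w Z - c * D Z))
      = (\<Sum>Z\<in>Pow S. bernoulli_subset_weight p S Z * sum w Z)
        - c * (\<Sum>Z\<in>Pow S. bernoulli_subset_weight p S Z * D Z)" for D :: "'a set \<Rightarrow> real"
    by (simp add: sum_subtractf sum_distrib_left algebra_simps)
  have "(\<Sum>Z\<in>Pow S. bernoulli_subset_weight p S Z *
             (sum w Z - c * (\<Sum>l\<in>Z. \<Sum>l'\<in>Z. w l * \<alpha> l' l)))
      = (\<Sum>Z\<in>Pow S. bernoulli_subset_weight p S Z * sum w Z)
        - c * (\<Sum>Z\<in>Pow S. bernoulli_subset_weight p S Z * (\<Sum>l\<in>Z. \<Sum>l'\<in>Z. w l * \<alpha> l' l))"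
    by (rule linearity)
  also have "\<dots> = p * sum w S - c * (\<Sum>l\<in>S. \<Sum>l'\<in>S. w l * \<alpha> l' l * p ^ card {l, l'})"
    using assms(1)
    by (simp only: expectation_sum_bernoulli_subset expectation_double_sum_bernoulli_subset)
  finally show ?thesis
    using quadratic assms(3) by (simp add: mult_left_mono mult.assoc)
qed

lemma sum_weight_light_part_ge:
  fixes w :: "'a \<Rightarrow> real" and \<alpha> :: "'a \<Rightarrow> 'a \<Rightarrow> real"
  assumes "finite Z" and "0 < t"
    and "\<And>l. l \<in> Z \<Longrightarrow> 0 \<le> w l"
    and "\<And>l l'. l \<in> Z \<Longrightarrow> l' \<in> Z \<Longrightarrow> 0 \<le> \<alpha> l' l"
  shows "sum w Z - (1 / t) * (\<Sum>l\<in>Z. \<Sum>l'\<in>Z. w l * \<alpha> l' l)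
       \<le> sum w {l \<in> Z. (\<Sum>l'\<in>Z. \<alpha> l' l) \<le> t}"
proof -
  let ?Y = "{l \<in> Z. (\<Sum>l'\<in>Z. \<alpha> l' l) \<le> t}"
  have load_nonneg: "0 \<le> w l * (\<Sum>l'\<in>Z. \<alpha> l' l) / t" if "l \<in> Z" for l
    using that assms by (simp add: sum_nonneg)
  have "sum w (Z - ?Y) \<le> (\<Sum>l\<in>Z - ?Y. w l * (\<Sum>l'\<in>Z. \<alpha> l' l) / t)"
  proof (rule sum_mono)
    fix l assume l: "l \<in> Z - ?Y"
    then have "w l * t \<le> w l * (\<Sum>l'\<in>Z. \<alpha> l' l)"
      using assms(3) by (intro mult_left_mono) auto
    then show "w l \<le> w l * (\<Sum>l'\<in>Z. \<alpha> l' l) / t"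
      using assms(2) by (simp add: field_simps)
  qed
  also have "\<dots> \<le> (\<Sum>l\<in>Z. w l * (\<Sum>l'\<in>Z. \<alpha> l' l) / t)"
    using assms(1) load_nonneg by (intro sum_mono2) auto
  also have "\<dots> = (1 / t) * (\<Sum>l\<in>Z. \<Sum>l'\<in>Z. w l * \<alpha> l' l)"
    by (simp add: sum_distrib_left sum_divide_distrib)
  finally show ?thesis
    using sum_diff[OF assms(1), of ?Y w] by auto
qed

lemma exists_light_subset_of_large_weight:
  fixes w :: "'a \<Rightarrow> real" and \<alpha> :: "'a \<Rightarrow> 'a \<Rightarrow> real"
  assumes "finite S" and "0 < t" and "t \<le> 1"
    and "\<And>l. l \<in> S \<Longrightarrow> 0 \<le> w l"
    and "\<And>l l'. l \<in> S \<Longrightarrow> l' \<in> S \<Longrightarrow> 0 \<le> \<alpha> l' l"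
    and "\<And>l. l \<in> S \<Longrightarrow> \<alpha> l l = 0"
    and "\<And>l. l \<in> S \<Longrightarrow> (\<Sum>l'\<in>S. \<alpha> l' l) \<le> 1"
  obtains Y where "Y \<subseteq> S" and "\<And>l. l \<in> Y \<Longrightarrow> (\<Sum>l'\<in>Y. \<alpha> l' l) \<le> t"
    and "t / 4 * sum w S \<le> sum w Y"
proof -
  define \<Phi> where "\<Phi> Z = sum w Z - (1 / t) * (\<Sum>l\<in>Z. \<Sum>l'\<in>Z. w l * \<alpha> l' l)" for Z
  define p where "p = t / 2"
  have "t / 4 * sum w S = p * sum w S - (1 / t) * p\<^sup>2 * sum w S"
    using assms(2) by (simp add: p_def power2_eq_square field_simps)
  also have "\<dots> \<le> (\<Sum>Z\<in>Pow S. bernoulli_subset_weight p S Z * \<Phi> Z)"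
    unfolding \<Phi>_def using assms(1,2,4,6,7)
    by (intro expected_interference_potential_ge) (auto simp: p_def)
  finally have expectation: "t / 4 * sum w S \<le> (\<Sum>Z\<in>Pow S. bernoulli_subset_weight p S Z * \<Phi> Z)" .
  obtain Z where Z: "Z \<in> Pow S" "(\<Sum>Z\<in>Pow S. bernoulli_subset_weight p S Z * \<Phi> Z) \<le> \<Phi> Z"
    by (rule exists_ge_weighted_average[of "Pow S" "bernoulli_subset_weight p S"])
      (use assms(1,2,3) in \<open>auto simp: p_def bernoulli_subset_weight_nonneg sum_bernoulli_subset_weight\<close>)
  then have "Z \<subseteq> S" by simp
  define Y where "Y = {l \<in> Z. (\<Sum>l'\<in>Z. \<alpha> l' l) \<le> t}"
  have finite_Z: "finite Z" using \<open>Z \<subseteq> S\<close> assms(1) finite_subset by blast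
  show thesis
  proof
    show "Y \<subseteq> S" using \<open>Z \<subseteq> S\<close> by (auto simp: Y_def)
  next
    fix l assume l: "l \<in> Y"
    then have "(\<Sum>l'\<in>Y. \<alpha> l' l) \<le> (\<Sum>l'\<in>Z. \<alpha> l' l)"
      using finite_Z \<open>Z \<subseteq> S\<close> assms(5) by (intro sum_mono2) (auto simp: Y_def)
    then show "(\<Sum>l'\<in>Y. \<alpha> l' l) \<le> t" using l by (auto simp: Y_def)
  next
    have "\<Phi> Z \<le> sum w Y"
      unfolding \<Phi>_def Y_def using finite_Z assms(2) \<open>Z \<subseteq> S\<close> assms(4,5)
      by (intro sum_weight_light_part_ge) (auto simp: subset_iff)
    then show "t / 4 * sum w S \<le> sum w Y" using expectation Z(2) by linarith
  qed
qed

definition affect_coeff ::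
  "real \<Rightarrow> real \<Rightarrow> real \<Rightarrow> real \<Rightarrow> ('l \<Rightarrow> real^2) \<Rightarrow> ('l \<Rightarrow> real^2) \<Rightarrow> ('l \<Rightarrow> real) \<Rightarrow> 'l \<Rightarrow> 'l \<Rightarrow> real"
  where "affect_coeff \<eta> \<kappa> \<sigma> \<xi> u v P l' l = c_fac \<eta> \<kappa> \<sigma> \<xi> u v P l * rel_interf \<eta> \<kappa> u v P l' l"

lemma affectness_eq_sum_affect_coeff:
  "affectness \<eta> \<kappa> \<sigma> \<xi> u v P S l = (\<Sum>l'\<in>S. affect_coeff \<eta> \<kappa> \<sigma> \<xi> u v P l' l)"
  by (simp add: affectness_def affect_coeff_def sum_distrib_left)

lemma affect_coeff_self [simp]: "affect_coeff \<eta> \<kappa> \<sigma> \<xi> u v P l l = 0"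
  by (simp add: affect_coeff_def rel_interf_def)

lemma c_fac_pos:
  assumes "0 < \<sigma>" and "0 \<le> \<xi>" and "\<sigma> * \<xi> < P l * \<eta> * link_len u v l powr (-\<kappa>)"
  shows "0 < c_fac \<eta> \<kappa> \<sigma> \<xi> u v P l"
proof -
  have "0 \<le> \<sigma> * \<xi>" using assms(1,2) by simp
  then have "\<sigma> * \<xi> / (P l * \<eta> * link_len u v l powr (-\<kappa>)) < 1"
    using assms(3) by (simp add: divide_less_eq)
  then show ?thesis using assms(1) by (simp add: c_fac_def)
qed

lemma rel_interf_nonneg:
  assumes "0 \<le> \<eta>" and "\<forall>l. 0 \<le> P l"
  shows "0 \<le> rel_interf \<eta> \<kappa> u v P l' l"
  using assms by (simp add: rel_interf_def)

lemma affect_coeff_nonneg: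
  assumes "0 < \<eta>" and "0 < \<sigma>" and "0 \<le> \<xi>" and "\<forall>l. 0 < P l"
    and "\<sigma> * \<xi> < P l * \<eta> * link_len u v l powr (-\<kappa>)"
  shows "0 \<le> affect_coeff \<eta> \<kappa> \<sigma> \<xi> u v P l' l"
  using assms c_fac_pos[of \<sigma> \<xi> P l \<eta> u v \<kappa>] rel_interf_nonneg[of \<eta> P \<kappa> u v l' l]
  by (simp add: affect_coeff_def less_imp_le)

lemma p_signal_subset:
  assumes "p_signal \<eta> \<kappa> \<sigma> \<xi> u v P p S" and "Y \<subseteq> S"
    and "\<And>l. l \<in> Y \<Longrightarrow> affectness \<eta> \<kappa> \<sigma> \<xi> u v P Y l \<le> 1 / q"
  shows "p_signal \<eta> \<kappa> \<sigma> \<xi> u v P q Y"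
  using assms finite_subset unfolding p_signal_def by blast

lemma affectness_mono:
  assumes "finite S" and "T \<subseteq> S"
    and "0 < \<eta>" and "0 < \<sigma>" and "0 \<le> \<xi>" and "\<forall>l. 0 < P l"
    and "\<sigma> * \<xi> < P l * \<eta> * link_len u v l powr (-\<kappa>)"
  shows "affectness \<eta> \<kappa> \<sigma> \<xi> u v P T l \<le> affectness \<eta> \<kappa> \<sigma> \<xi> u v P S l"
  unfolding affectness_eq_sum_affect_coeff
  using assms by (intro sum_mono2 affect_coeff_nonneg) auto

lemma exists_signal_subset_of_large_weight:
  assumes "0 < \<eta>" and "0 < \<sigma>" and "0 \<le> \<xi>" and "\<forall>l. 0 < P l"
    and "\<forall>l\<in>L. \<sigma> * \<xi> < P l * \<eta> * link_len u v l powr (-\<kappa>)"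
    and "\<forall>l\<in>L. 0 \<le> w l"
    and "p_signal \<eta> \<kappa> \<sigma> \<xi> u v P 1 S"
    and "0 < t" and "t \<le> 1"
  obtains Y where "Y \<subseteq> S \<inter> L" and "p_signal \<eta> \<kappa> \<sigma> \<xi> u v P (1 / t) Y"
    and "t / 4 * total_weight w (S \<inter> L) \<le> total_weight w Y"
proof -
  define \<alpha> where "\<alpha> = affect_coeff \<eta> \<kappa> \<sigma> \<xi> u v P"
  have "finite S" using assms(7) by (simp add: p_signal_def)
  have \<alpha>_nonneg: "0 \<le> \<alpha> l' l" if "l \<in> L" for l l'
    unfolding \<alpha>_def using assms(1-5) that by (intro affect_coeff_nonneg) auto
  have budget: "(\<Sum>l'\<in>S \<inter> L. \<alpha> l' l) \<le> 1" if "l \<in> S \<inter> L" for l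
  proof -
    have "affectness \<eta> \<kappa> \<sigma> \<xi> u v P (S \<inter> L) l \<le> affectness \<eta> \<kappa> \<sigma> \<xi> u v P S l"
      using that assms(1-5) by (intro affectness_mono[OF \<open>finite S\<close>]) auto
    also have "\<dots> \<le> 1"
      using assms(7) that by (simp add: p_signal_def)
    finally show ?thesis by (simp add: \<alpha>_def affectness_eq_sum_affect_coeff)
  qed
  obtain Y where Y: "Y \<subseteq> S \<inter> L" "\<And>l. l \<in> Y \<Longrightarrow> (\<Sum>l'\<in>Y. \<alpha> l' l) \<le> t"
    and heavy: "t / 4 * sum w (S \<inter> L) \<le> sum w Y"
    by (rule exists_light_subset_of_large_weight[of "S \<inter> L" t w \<alpha>])
      (use \<open>finite S\<close> assms(6,8,9) \<alpha>_nonneg budget in \<open>auto simp: \<alpha>_def\<close>)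
  have "p_signal \<eta> \<kappa> \<sigma> \<xi> u v P (1 / t) Y"
    by (rule p_signal_subset[OF assms(7)])
      (use Y in \<open>auto simp: affectness_eq_sum_affect_coeff \<alpha>_def\<close>)
  then show thesis
    by (rule that[OF Y(1)]) (use heavy in \<open>simp add: total_weight_def\<close>)
qed

theorem lemma4:
  fixes \<eta> \<kappa> \<sigma> \<xi> \<epsilon> :: real
    and u v :: "'l \<Rightarrow> real^2"
    and P w :: "'l \<Rightarrow> real"
    and L Sstar X :: "'l set"
  assumes "\<eta> > 0" and "\<kappa> > 2" and "\<sigma> > 0" and "\<xi> \<ge> 0"
    and "0 < \<epsilon>" and "\<epsilon> < 1"
    and "finite L"
    and "\<forall>l. P l > 0"
    and "\<forall>l\<in>L. P l * \<eta> * link_len u v l powr (-\<kappa>) > \<sigma> * \<xi>"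
    and "\<forall>l\<in>L. w l \<ge> 0"
    and "p_signal \<eta> \<kappa> \<sigma> \<xi> u v P 1 Sstar"
    and "X \<subseteq> L"
    and "p_signal \<eta> \<kappa> \<sigma> \<xi> u v P (1 / (1 - \<epsilon>)) X"
    and "\<forall>Y. Y \<subseteq> L \<and> p_signal \<eta> \<kappa> \<sigma> \<xi> u v P (1 / (1 - \<epsilon>)) Y
              \<longrightarrow> total_weight w Y \<le> total_weight w X"
  shows "total_weight w (Sstar \<inter> L) \<le> 4 / (1 - \<epsilon>)^2 * total_weight w X"
proof -
  define t where "t = 1 - \<epsilon>"
  have t: "0 < t" "t \<le> 1" using assms(5,6) by (auto simp: t_def)
  obtain Y where "Y \<subseteq> Sstar \<inter> L" and "p_signal \<eta> \<kappa> \<sigma> \<xi> u v P (1 / t) Y"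
    and heavy: "t / 4 * total_weight w (Sstar \<inter> L) \<le> total_weight w Y"
    by (rule exists_signal_subset_of_large_weight[OF assms(1,3,4,8,9,10,11) t])
  then have "total_weight w Y \<le> total_weight w X"
    using assms(14) unfolding t_def by blast
  with heavy have "t / 4 * total_weight w (Sstar \<inter> L) \<le> total_weight w X"
    by linarith
  moreover have "0 \<le> total_weight w X"
    using assms(10,12) by (auto simp: total_weight_def intro: sum_nonneg)
  ultimately have "total_weight w (Sstar \<inter> L) \<le> 4 / t * total_weight w X"
    using t(1) by (simp add: field_simps)
  also have "\<dots> \<le> 4 / t\<^sup>2 * total_weight w X"
    using \<open>0 \<le> total_weight w X\<close> t
    by (intro mult_right_mono) (auto simp: power2_eq_square field_simps)
  finally show ?thesis by (simp add: t_def)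
qed

end
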